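(* Consider NSGA-III (as described in the context) with population size $\mu \ge n+1$ and $\mu = \mathrm{poly}(n)$, nadir threshold $\varepsilon_{\mathrm{nad}} \ge n$ and reference-point parameter $p \ge 4\sqrt{2}\,n$, maximizing $2$-OMM on $\{0,1\}^n$, and let $c>0$ be a constant. Then, with probability $1-o(1)$, after $cn/\ln(n)$ generations there is no $y \in P_t$ with $|y|_1 \ge 3n/4$.
   Context: For $x\in\{0,1\}^n$ let $|x|_1$ be its number of ones and $|x|_0 = n-|x|_1$ its number of zeros. The bi-objective function $2$-OMM$\colon \{0,1\}^n\to\mathbb{N}_0^2$ is $x\mapsto (|x|_1,|x|_0)$, to be maximized. NSGA-III with population size $\mu$ works as follows. $P_0$ consists of $\mu$ independent uniformly random bit strings. In generation $t$, an offspring multiset $Q_t$ of $\mu$ individuals is created, each by choosing a parent uniformly at random from $P_t$ and flipping each bit independently with probability $1/n$. $R_t=P_t\cup Q_t$ is partitioned by non-dominated sorting into fronts $F^1_t,F^2_t,\dots$ ($F^1_t$ the non-dominated individuals, $F^i_t$ those dominated only by individuals of earlier fronts); let $i^*$ be minimal with $\sum_{i\le i^*}|F^i_t|\ge\mu$; all individuals of $F^1_t,\dots,F^{i^*-1}_t$ survive and the rest are selected from $F^{i^*}_t$ as follows. Objectives are normalized as $f^n_j(x)=(f_j(x)-y_j^{\min})/(y_j^{\mathrm{nad}}-y_j^{\min})$, where $y^{\min}_j$ is the minimum value of objective $j$ seen so far and the nadir point $y^{\mathrm{nad}}$ is computed by the procedure of Wietheger and Doerr (2023), satisfying $y^{\mathrm{nad}}_j\ge\varepsilon_{\mathrm{nad}}$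 for a user threshold $\varepsilon_{\mathrm{nad}}>0$. The reference points are $\mathcal{R}_p=\{(a_1/p,\dots,a_m/p): a_i\in\mathbb{N}_0,\sum a_i=p\}$ ($m$ the number of objectives). Each individual is associated with the reference point $r$ minimizing the distance from its normalized vector to the line through the origin and $r$. Then repeatedly a reference point $r$ with the fewest already selected associated individuals (counting the individuals of earlier fronts; ties broken uniformly at random) is chosen; among the not-yet-selected individuals of $F^{i^*}_t$ associated with $r$, one whose normalized vector is closest to $r$ is selected (ties broken at random); if none exists, $r$ is discarded; this stops when $\mu$ individuals are selected in total, giving $P_{t+1}$. Asymptotic notation refers to $n\to\infty$. *)

theory Defs
  imports "HOL-Probability.Probability" "HOL-Library.Landau_Symbols"
begin

definition ones :: "bool list \<Rightarrow> nat" where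
  "ones x = length (filter id x)"

definition zeros :: "bool list \<Rightarrow> nat" where
  "zeros x = length x - ones x"

definition omm :: "bool list \<Rightarrow> real \<times> real" where
  "omm x = (real (ones x), real (zeros x))"

definition dominates :: "real \<times> real \<Rightarrow> real \<times> real \<Rightarrow> bool" where
  "dominates a b \<longleftrightarrow> fst b \<le> fst a \<and> snd b \<le> snd a \<and> a \<noteq> b"

fun iid_list :: "nat \<Rightarrow> 'a pmf \<Rightarrow> 'a list pmf" where
  "iid_list 0 D = return_pmf []"
| "iid_list (Suc k) D = bind_pmf D (\<lambda>x. map_pmf (\<lambda>xs. x # xs) (iid_list k D))"

fun mutate :: "nat \<Rightarrow> bool list \<Rightarrow> bool list pmf" where
  "mutate n [] = return_pmf []"
| "mutate n (b # bs) = bind_pmf (bernoulli_pmf (1 / real n))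
      (\<lambda>f. map_pmf (\<lambda>r. (b \<noteq> f) # r) (mutate n bs))"

fun nd_sort :: "nat \<Rightarrow> (nat \<Rightarrow> real \<times> real) \<Rightarrow> nat set \<Rightarrow> nat set list" where
  "nd_sort 0 v S = []"
| "nd_sort (Suc k) v S = (if S = {} then [] else
     (let F = {i \<in> S. \<not> (\<exists>j\<in>S. dominates (v j) (v i))} in F # nd_sort k v (S - F)))"

definition refpt :: "nat \<Rightarrow> nat \<Rightarrow> real \<times> real" where
  "refpt p a = (real a / real p, real (p - a) / real p)"

definition refline :: "nat \<Rightarrow> nat \<Rightarrow> (real \<times> real) set" where
  "refline p a = range (\<lambda>t::real. t *\<^sub>R refpt p a)"

text \<open>niche fuel mu L as d Rav Sel: L = critical front, as i = associated reference point
  (index a in 0..p), d i = distance of normalized vector of i to its reference point,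
  Rav = not yet discarded reference points, Sel = already selected indices.\<close>
fun niche :: "nat \<Rightarrow> nat \<Rightarrow> nat set \<Rightarrow> (nat \<Rightarrow> nat) \<Rightarrow> (nat \<Rightarrow> real) \<Rightarrow> nat set \<Rightarrow> nat set
    \<Rightarrow> nat set pmf" where
  "niche 0 mu L as d Rav Sel = return_pmf Sel"
| "niche (Suc k) mu L as d Rav Sel =
     (if mu \<le> card Sel \<or> Rav = {} then return_pmf Sel else
       (let cnt = (\<lambda>r. card {i \<in> Sel. as i = r}); m = Min (cnt ` Rav) in
        bind_pmf (pmf_of_set {r \<in> Rav. cnt r = m}) (\<lambda>r.
          (let C = {i \<in> L - Sel. as i = r} in
           if C = {} then niche k mu L as d (Rav - {r}) Sel
           else (let dm = Min (d ` C) in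
                 bind_pmf (pmf_of_set {i \<in> C. d i = dm})
                   (\<lambda>i. niche k mu L as d Rav (insert i Sel)))))))"

text \<open>Survival selection of NSGA-III on R (a list of 2 mu individuals), given the history
  H' of all R's so far (for y_min) and the nadir point nd. Returns the selected index set.\<close>
definition survival :: "nat \<Rightarrow> nat \<Rightarrow> real \<times> real \<Rightarrow> bool list list list \<Rightarrow> bool list list
    \<Rightarrow> nat set pmf" where
  "survival mu p nd H' R =
    (let v = (\<lambda>i. omm (R ! i));
         N = length R;
         Fs = nd_sort N v {..<N};
         istar = (LEAST i. mu \<le> (\<Sum>F\<leftarrow>take (Suc i) Fs. card F));
         Sel0 = \<Union> (set (take istar Fs));
         L = Fs ! istar;
         ymin = (Min ((\<lambda>x. real (ones x)) ` set (concat H')),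
                 Min ((\<lambda>x. real (zeros x)) ` set (concat H')));
         fn = (\<lambda>i. ((fst (v i) - fst ymin) / (fst nd - fst ymin),
                    (snd (v i) - snd ymin) / (snd nd - snd ymin)));
         as = (\<lambda>i. LEAST a. a \<le> p \<and>
                   (\<forall>b\<le>p. infdist (fn i) (refline p a) \<le> infdist (fn i) (refline p b)));
         d = (\<lambda>i. dist (fn i) (refpt p (as i)))
     in niche (card L + p + 1) mu L as d {..p} Sel0)"

text \<open>State: current population and history of all combined populations R_0..R_{t-1}.
  nadf maps the history (including the current R_t) to the nadir point.\<close>
definition nsga3_step :: "nat \<Rightarrow> nat \<Rightarrow> nat \<Rightarrow> (bool list list list \<Rightarrow> real \<times> real)
    \<Rightarrow> bool list list \<times> bool list list list \<Rightarrow> (bool list list \<times> bool list list list) pmf" where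
  "nsga3_step n mu p nadf = (\<lambda>(P, H).
     bind_pmf (iid_list mu (bind_pmf (pmf_of_set {..<length P}) (\<lambda>i. mutate n (P ! i))))
       (\<lambda>Q. let R = P @ Q; H' = H @ [R] in
            map_pmf (\<lambda>S. (map (\<lambda>i. R ! i) (sorted_list_of_set S), H'))
                    (survival mu p (nadf H') H' R)))"

fun nsga3_run :: "nat \<Rightarrow> nat \<Rightarrow> nat \<Rightarrow> (bool list list list \<Rightarrow> real \<times> real) \<Rightarrow> nat
    \<Rightarrow> (bool list list \<times> bool list list list) pmf" where
  "nsga3_run n mu p nadf 0 =
     map_pmf (\<lambda>P. (P, [])) (iid_list mu (pmf_of_set {x :: bool list. length x = n}))"
| "nsga3_run n mu p nadf (Suc t) = bind_pmf (nsga3_run n mu p nadf t) (nsga3_step n mu p nadf)"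

end

theory Submission
  imports Defs "HOL-Real_Asymp.Real_Asymp"
begin

(* Survival selection only keeps individuals of the parent and offspring populations, so the
   largest number of ones in the population grows only through mutation.  Initially all
   mu = poly(n) strings have at most 2n/3 ones, except with probability
   mu (3/2)^n / 2^(2n/3) = o(1).  An offspring has j + 1 more ones than its parent with
   probability at most C(n, j+1) / n^(j+1) <= 1/(j+1)!.  With j = ln n / (13 c), a union bound
   over the mu offspring of each of the T = c n / ln n generations fails with probability at
   most T mu / (j+1)! = o(1), and otherwise the maximum grows by at most T j <= n/13 in total.
   As 2/3 + 1/13 < 3/4, no individual reaches 3n/4 ones. *)

section \<open>Probabilities in composed distributions\<close>

lemma prob_bind_pmf:
  "measure_pmf.prob (bind_pmf M N) B = (\<integral>x. measure_pmf.prob (N x) B \<partial>M)"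
proof -
  have "emeasure (bind_pmf M N) B = (\<integral>\<^sup>+x. ennreal (measure_pmf.prob (N x) B) \<partial>M)"
    by (simp only: measure_pmf.emeasure_eq_measure[symmetric] emeasure_bind_pmf)
  also have "\<dots> = ennreal (\<integral>x. measure_pmf.prob (N x) B \<partial>M)"
    by (rule nn_integral_eq_integral) (auto intro!: measure_pmf.integrable_const_bound[where B=1])
  finally show ?thesis
    by (simp add: measure_pmf.emeasure_eq_measure)
qed

lemma prob_mono_on_set_pmf:
  assumes "\<And>x. x \<in> set_pmf M \<Longrightarrow> x \<in> A \<Longrightarrow> x \<in> B"
  shows "measure_pmf.prob M A \<le> measure_pmf.prob M B"
  using assms by (intro measure_pmf.finite_measure_mono_AE) (auto simp: AE_measure_pmf_iff)

lemma prob_bind_pmf_le: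
  assumes "\<And>x. x \<in> set_pmf M \<Longrightarrow> x \<in> G \<Longrightarrow> measure_pmf.prob (N x) B \<le> b" and "0 \<le> b"
  shows "measure_pmf.prob (bind_pmf M N) B \<le> measure_pmf.prob M (- G) + b"
proof -
  have "measure_pmf.prob (bind_pmf M N) B = (\<integral>x. measure_pmf.prob (N x) B \<partial>M)"
    by (rule prob_bind_pmf)
  also have "\<dots> \<le> (\<integral>x. indicator (- G) x + b \<partial>M)"
  proof (rule integral_mono_AE)
    show "integrable M (\<lambda>x. measure_pmf.prob (N x) B)"
      by (auto intro!: measure_pmf.integrable_const_bound[where B=1])
    show "integrable M (\<lambda>x. indicator (- G) x + b)"
      by (auto intro!: measure_pmf.integrable_const_bound[where B="1 + \<bar>b\<bar>"] simp: indicator_def)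
    show "AE x in M. measure_pmf.prob (N x) B \<le> indicator (- G) x + b"
      using assms by (auto simp: AE_measure_pmf_iff indicator_def intro: order.trans[OF measure_pmf.prob_le_1])
  qed
  also have "\<dots> = measure_pmf.prob M (- G) + b"
    by (subst Bochner_Integration.integral_add) (auto intro!: measure_pmf.integrable_const_bound[where B=1])
  finally show ?thesis .
qed

lemma set_pmf_iid_list: "xs \<in> set_pmf (iid_list k D) \<Longrightarrow> length xs = k \<and> set xs \<subseteq> set_pmf D"
  by (induction k arbitrary: xs) fastforce+

lemma prob_iid_list_exists_le:
  "measure_pmf.prob (iid_list k D) {xs. \<exists>x\<in>set xs. x \<in> B} \<le> real k * measure_pmf.prob D B"
proof (induction k)
  case (Suc k)
  have "measure_pmf.prob (iid_list (Suc k) D) {xs. \<exists>x\<in>set xs. x \<in> B}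
      \<le> measure_pmf.prob D (- (- B)) + real k * measure_pmf.prob D B"
    unfolding iid_list.simps
    by (rule prob_bind_pmf_le) (use Suc.IH in \<open>simp_all add: vimage_def\<close>)
  then show ?case by (simp add: algebra_simps)
qed simp

section \<open>Mutation and uniformly random bit strings\<close>

lemma ones_Nil [simp]: "ones [] = 0"
  and ones_Cons [simp]: "ones (b # bs) = (if b then 1 else 0) + ones bs"
  by (auto simp: ones_def)

lemma length_mutate: "y \<in> set_pmf (mutate n x) \<Longrightarrow> length y = length x"
  by (induction n x arbitrary: y rule: mutate.induct) auto

lemma prob_mutate_Cons:
  "measure_pmf.prob (mutate n (b # bs)) B
     = 1 / real n * measure_pmf.prob (mutate n bs) {r. (\<not> b) # r \<in> B}
       + (1 - 1 / real n) * measure_pmf.prob (mutate n bs) {r. b # r \<in> B}"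
proof -
  have "0 \<le> 1 / real n" "1 / real n \<le> 1"
    by (auto simp: divide_le_eq)
  then show ?thesis
    by (simp add: prob_bind_pmf vimage_def algebra_simps)
qed

lemma prob_mutate_gain_ge:
  "measure_pmf.prob (mutate n x) {y. ones x + j \<le> ones y} \<le> real (length x choose j) * (1 / real n) ^ j"
proof (induction x arbitrary: j)
  case Nil
  then show ?case by (cases j) auto
next
  case (Cons b bs)
  define q where "q = 1 / real n"
  have q: "0 \<le> q" "q \<le> 1" by (auto simp: q_def divide_le_eq)
  show ?case
  proof (cases j)
    case 0
    then show ?thesis by (simp add: measure_pmf.prob_le_1)
  next
    case (Suc i)
    have "measure_pmf.prob (mutate n bs) {r. (\<not> b) # r \<in> {y. ones (b # bs) + j \<le> ones y}}
        \<le> measure_pmf.prob (mutate n bs) {r. ones bs + i \<le> ones r}"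
      by (intro prob_mono_on_set_pmf) (auto simp: Suc split: if_splits)
    moreover have "measure_pmf.prob (mutate n bs) {r. b # r \<in> {y. ones (b # bs) + j \<le> ones y}}
        \<le> measure_pmf.prob (mutate n bs) {r. ones bs + j \<le> ones r}"
      by (intro prob_mono_on_set_pmf) (auto split: if_splits)
    ultimately have "measure_pmf.prob (mutate n (b # bs)) {y. ones (b # bs) + j \<le> ones y}
        \<le> q * (real (length bs choose i) * q ^ i) + (1 - q) * (real (length bs choose j) * q ^ j)"
      unfolding prob_mutate_Cons q_def[symmetric] using Cons.IH[of i] Cons.IH[of j] q
      by (intro add_mono mult_left_mono) (auto simp: q_def)
    also have "\<dots> \<le> real (length bs choose i) * q ^ j + real (length bs choose j) * q ^ j"
      using q by (auto simp: Suc intro!: mult_left_le_one_le mult_nonneg_nonneg)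
    also have "\<dots> = real (length (b # bs) choose j) * q ^ j"
      by (simp add: Suc algebra_simps)
    finally show ?thesis by (simp add: q_def)
  qed
qed

lemma sum_pow_ones: "(\<Sum>x\<in>{x :: bool list. length x = n}. a ^ ones x) = (1 + a :: real) ^ n"
proof (induction n)
  case (Suc n)
  have lists_Suc: "{x :: bool list. length x = Suc n} = (\<lambda>(b, xs). b # xs) ` (UNIV \<times> {x. length x = n})"
    by (auto simp: image_iff length_Suc_conv)
  have "inj_on (\<lambda>(b, xs). b # xs) (UNIV \<times> {x :: bool list. length x = n})"
    by (auto simp: inj_on_def)
  then have "(\<Sum>x\<in>{x :: bool list. length x = Suc n}. a ^ ones x)
      = (\<Sum>b\<in>UNIV. \<Sum>xs\<in>{x. length x = n}. a ^ ones (b # xs))"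
    unfolding lists_Suc by (simp add: sum.reindex sum.cartesian_product case_prod_unfold)
  also have "\<dots> = (\<Sum>xs\<in>{x. length x = n}. a ^ ones xs) + a * (\<Sum>xs\<in>{x. length x = n}. a ^ ones xs)"
    by (simp add: UNIV_bool sum_distrib_left)
  also have "\<dots> = (1 + a) * (1 + a) ^ n"
    by (simp add: Suc.IH algebra_simps)
  finally show ?case by simp
qed simp

text \<open>Exponential Markov inequality: every string with at least \<open>m\<close> ones has weight
  \<open>2 ^ ones y / 2 ^ m \<ge> 1\<close>, and the total weight is \<open>3 ^ n / 2 ^ m\<close>.\<close>
lemma prob_uniform_ones_ge:
  "measure_pmf.prob (pmf_of_set {x :: bool list. length x = n}) {y. m \<le> ones y} \<le> (3 / 2) ^ n / 2 ^ m"
proof -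
  let ?S = "{x :: bool list. length x = n}"
  have fin: "finite ?S"
    using finite_lists_length_eq[of "UNIV :: bool set" n] by simp
  have "real (card (?S \<inter> {y. m \<le> ones y})) = (\<Sum>x\<in>?S \<inter> {y. m \<le> ones y}. 1)"
    by simp
  also have "\<dots> \<le> (\<Sum>x\<in>?S \<inter> {y. m \<le> ones y}. (2::real) ^ ones x / 2 ^ m)"
    by (intro sum_mono) (auto simp: power_increasing)
  also have "\<dots> \<le> (\<Sum>x\<in>?S. (2::real) ^ ones x / 2 ^ m)"
    by (intro sum_mono2 fin) auto
  also have "\<dots> = 3 ^ n / 2 ^ m"
    by (simp add: sum_divide_distrib[symmetric] sum_pow_ones)
  finally have "real (card (?S \<inter> {y. m \<le> ones y})) / 2 ^ n \<le> (3 ^ n / 2 ^ m) / 2 ^ n"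
    by (intro divide_right_mono) auto
  moreover have "?S \<noteq> {}"
    by (auto intro: exI[of _ "replicate n True"])
  ultimately show ?thesis
    using fin card_lists_length_eq[of "UNIV :: bool set" n]
    by (simp add: measure_pmf_of_set power_divide mult.commute)
qed

lemma three_halves_div_two_powr_less_one: "(3 / 2 :: real) / 2 powr (2 / 3) < 1"
proof -
  have "((2::real) powr (2 / 3)) ^ 3 = 4"
    by (simp add: powr_power)
  then have "(3 / 2 :: real) ^ 3 < (2 powr (2 / 3)) ^ 3"
    by (simp add: power3_eq_cube)
  then have "3 / 2 < (2::real) powr (2 / 3)"
    by (rule power_less_imp_less_base) auto
  then show ?thesis by simp
qed

lemma three_halves_pow_div_le:
  "(3 / 2) ^ n / 2 ^ Suc (2 * n div 3) \<le> ((3 / 2) / 2 powr (2 / 3) :: real) ^ n"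
proof -
  have "(2::real) powr (2 * real n / 3) \<le> 2 powr real (Suc (2 * n div 3))"
    by (intro powr_mono) linarith+
  then have "(2::real) powr (2 * real n / 3) \<le> 2 ^ Suc (2 * n div 3)"
    by (simp only: powr_realpow zero_less_numeral)
  moreover have "((2::real) powr (2 / 3)) ^ n = 2 powr (real n * (2 / 3))"
    by (rule powr_power) simp
  then have "((3 / 2) / 2 powr (2 / 3) :: real) ^ n = (3 / 2) ^ n / 2 powr (2 * real n / 3)"
    by (simp add: power_divide mult.commute)
  ultimately show ?thesis
    by (simp add: frac_le)
qed

lemma binomial_mult_inverse_pow_le: "real (n choose k) * (1 / real n) ^ k \<le> 1 / fact k"
proof (cases "n = 0")
  case False
  have "real (n choose k) * fact k \<le> real n ^ k"
    using binomial_fact_pow[of n k] by (metis of_nat_fact of_nat_le_iff of_nat_mult of_nat_power)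
  with False show ?thesis
    by (simp add: power_one_over field_simps)
qed (cases k, simp_all)

lemma pow_div_fact_le_exp: "0 \<le> x \<Longrightarrow> x ^ k / fact k \<le> exp (x::real)"
  using sum_le_suminf[of "\<lambda>n. x ^ n / fact n" "{k}"] exp_converges[of x]
  by (simp add: sums_iff divide_inverse mult.commute)

lemma powr_div_exp_le_fact:
  fixes L :: real
  assumes "0 < L" "L \<le> real k"
  shows "(L / exp 1) powr L \<le> fact k"
proof (cases "L \<le> exp 1")
  case True
  then have "(L / exp 1) powr L \<le> 1"
    using assms by (intro powr_le1) auto
  then show ?thesis by (rule order.trans) simp
next
  case False
  have "(L / exp 1) powr L \<le> (L / exp 1) powr real k"
    using False assms by (intro powr_mono) auto
  also have "\<dots> \<le> (real k / exp 1) ^ k"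
    using assms by (simp add: powr_realpow power_mono divide_right_mono)
  also have "\<dots> = real k ^ k / exp (real k)"
    by (simp add: power_divide exp_of_nat_mult[symmetric])
  also have "\<dots> \<le> fact k"
    using pow_div_fact_le_exp[of "real k" k] by (simp add: divide_le_eq mult.commute)
  finally show ?thesis .
qed

section \<open>Survival selection\<close>

lemma dominates_imp_sum_less: "dominates a b \<Longrightarrow> fst b + snd b < fst a + snd a"
  by (cases a; cases b) (auto simp: dominates_def)

text \<open>A maximiser of \<open>fst + snd\<close> is non-dominated.\<close>
lemma nondominated_nonempty:
  assumes "finite S" "S \<noteq> {}"
  shows "{i \<in> S. \<not> (\<exists>j\<in>S. dominates (v j) (v i))} \<noteq> {}"
proof -
  let ?g = "\<lambda>i. fst (v i) + snd (v i)"
  have "Max (?g ` S) \<in> ?g ` S"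
    using assms by (intro Max_in) auto
  then obtain i where i: "i \<in> S" "?g i = Max (?g ` S)"
    by auto
  have "?g j \<le> ?g i" if "j \<in> S" for j
    using i that assms by simp
  then have "\<not> dominates (v j) (v i)" if "j \<in> S" for j
    using that dominates_imp_sum_less by fastforce
  with i show ?thesis by auto
qed

lemma nd_sort_fronts: "finite S \<Longrightarrow> F \<in> set (nd_sort k v S) \<Longrightarrow> F \<subseteq> S \<and> F \<noteq> {}"
proof (induction k arbitrary: S)
  case (Suc k)
  let ?F = "{i \<in> S. \<not> (\<exists>j\<in>S. dominates (v j) (v i))}"
  from Suc.prems have "S \<noteq> {}" and "F = ?F \<or> F \<in> set (nd_sort k v (S - ?F))"
    by (auto simp: Let_def split: if_splits)
  then show ?case
    using Suc.IH[of "S - ?F"] Suc.prems nondominated_nonempty[of S v] by auto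
qed simp

lemma sum_card_nd_sort: "finite S \<Longrightarrow> card S \<le> k \<Longrightarrow> (\<Sum>F\<leftarrow>nd_sort k v S. card F) = card S"
proof (induction k arbitrary: S)
  case (Suc k)
  show ?case
  proof (cases "S = {}")
    case False
    let ?F = "{i \<in> S. \<not> (\<exists>j\<in>S. dominates (v j) (v i))}"
    have "?F \<noteq> {}" "finite ?F" "?F \<subseteq> S"
      using nondominated_nonempty[OF Suc.prems(1) False] Suc.prems(1) by auto
    then have "card (S - ?F) = card S - card ?F" "0 < card ?F" "card ?F \<le> card S"
      using Suc.prems(1) by (auto simp: card_Diff_subset card_gt_0_iff card_mono)
    with False Suc show ?thesis by (simp add: Let_def)
  qed simp
qed simp

text \<open>Every round of niching either selects an individual of \<open>L\<close> or discards a reference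
  point, so fuel \<open>card (L - Sel) + card Rav\<close> suffices to finish.\<close>
lemma niche_invariant:
  assumes "finite L" "finite Sel" "finite Rav" "\<forall>i\<in>L - Sel. as i \<in> Rav"
    and "card (L - Sel) + card Rav \<le> k" "S \<in> set_pmf (niche k mu L as d Rav Sel)"
  shows "Sel \<subseteq> S \<and> S \<subseteq> Sel \<union> L \<and> (mu \<le> card S \<or> L \<subseteq> S)"
  using assms
proof (induction k arbitrary: Rav Sel)
  case (Suc k)
  show ?case
  proof (cases "mu \<le> card Sel \<or> Rav = {}")
    case False
    define cnt where "cnt r = card {i \<in> Sel. as i = r}" for r
    have "Min (cnt ` Rav) \<in> cnt ` Rav"
      using False Suc.prems(3) by (intro Min_in) auto
    then have "{r \<in> Rav. cnt r = Min (cnt ` Rav)} \<noteq> {}" by auto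
    with Suc.prems(3,6) False obtain r where r: "r \<in> Rav" and
      S: "S \<in> set_pmf (let C = {i \<in> L - Sel. as i = r} in
           if C = {} then niche k mu L as d (Rav - {r}) Sel
           else (let dm = Min (d ` C) in
                 bind_pmf (pmf_of_set {i \<in> C. d i = dm})
                   (\<lambda>i. niche k mu L as d Rav (insert i Sel))))"
      by (auto simp: Let_def cnt_def)
    define C where "C = {i \<in> L - Sel. as i = r}"
    show ?thesis
    proof (cases "C = {}")
      case True
      then have "\<forall>i\<in>L - Sel. as i \<in> Rav - {r}"
        using Suc.prems(4) by (auto simp: C_def)
      moreover have "card (L - Sel) + card (Rav - {r}) \<le> k"
        using r Suc.prems(3,5) card_gt_0_iff[of Rav] by auto
      ultimately show ?thesis
        using Suc.IH[of Sel "Rav - {r}"] Suc.prems(1-3) S True by (simp add: C_def)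
    next
      case False
      have "finite C" using Suc.prems(1) by (auto simp: C_def)
      then have "Min (d ` C) \<in> d ` C" using False by (intro Min_in) auto
      then have "{i \<in> C. d i = Min (d ` C)} \<noteq> {}" by auto
      moreover have "S \<in> set_pmf (bind_pmf (pmf_of_set {i \<in> C. d i = Min (d ` C)})
          (\<lambda>i. niche k mu L as d Rav (insert i Sel)))"
        using S False unfolding C_def[symmetric] Let_def by simp
      ultimately obtain i where "i \<in> C"
        and S': "S \<in> set_pmf (niche k mu L as d Rav (insert i Sel))"
        using \<open>finite C\<close> by (auto simp: set_pmf_of_set)
      then have i: "i \<in> L - Sel" by (simp add: C_def)
      have "card (L - insert i Sel) = card (L - Sel) - 1" "0 < card (L - Sel)"
        using i Suc.prems(1) card_gt_0_iff by (metis Diff_insert card_Diff_singleton, blast)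
      then have "card (L - insert i Sel) + card Rav \<le> k"
        using Suc.prems(5) by linarith
      then show ?thesis
        using Suc.IH[of "insert i Sel" Rav] Suc.prems(1-4) S' i by auto
    qed
  qed (use Suc.prems in auto)
qed simp

lemma Least_argmin_le: "(LEAST a. a \<le> p \<and> (\<forall>b\<le>p. f a \<le> f b)) \<le> (p :: nat)"
  for f :: "nat \<Rightarrow> 'a :: linorder"
proof -
  have "Min (f ` {..p}) \<in> f ` {..p}"
    by (intro Min_in) auto
  then obtain a where "a \<le> p" "f a = Min (f ` {..p})"
    by (metis atMost_iff imageE)
  then have "a \<le> p \<and> (\<forall>b\<le>p. f a \<le> f b)"
    by simp
  then show ?thesis
    by (rule LeastI2) auto
qed

lemma nd_sort_critical_index_less:
  assumes "1 \<le> mu" "mu \<le> N"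
  shows "(LEAST i. mu \<le> (\<Sum>F\<leftarrow>take (Suc i) (nd_sort N v {..<N}). card F)) < length (nd_sort N v {..<N})"
proof -
  define Fs where "Fs = nd_sort N v {..<N}"
  have "(\<Sum>F\<leftarrow>Fs. card F) = N"
    unfolding Fs_def by (simp add: sum_card_nd_sort)
  with assms have "Fs \<noteq> []" and "mu \<le> (\<Sum>F\<leftarrow>take (Suc (length Fs - 1)) Fs. card F)"
    by auto
  then have "(LEAST i. mu \<le> (\<Sum>F\<leftarrow>take (Suc i) Fs. card F)) \<le> length Fs - 1"
    by (intro Least_le)
  moreover have "0 < length Fs"
    using \<open>Fs \<noteq> []\<close> by simp
  ultimately show ?thesis
    unfolding Fs_def by linarith
qed

lemma survival_subset_nonempty:
  assumes "1 \<le> mu" "mu \<le> length R" "S \<in> set_pmf (survival mu p nd H R)"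
  shows "S \<subseteq> {..<length R} \<and> S \<noteq> {}"
proof -
  define Fs where "Fs = nd_sort (length R) (\<lambda>i. omm (R ! i)) {..<length R}"
  define i where "i = (LEAST i. mu \<le> (\<Sum>F\<leftarrow>take (Suc i) Fs. card F))"
  define Sel where "Sel = \<Union> (set (take i Fs))"
  have "i < length Fs"
    unfolding i_def Fs_def using assms(1,2) by (rule nd_sort_critical_index_less)
  have fronts: "F \<subseteq> {..<length R} \<and> F \<noteq> {}" if "F \<in> set Fs" for F
    using that nd_sort_fronts unfolding Fs_def by blast
  then have L: "Fs ! i \<subseteq> {..<length R}" "Fs ! i \<noteq> {}" and "Sel \<subseteq> {..<length R}"
    using \<open>i < length Fs\<close> unfolding Sel_def by (auto dest: in_set_takeD)
  then have fin: "finite (Fs ! i)" "finite Sel"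
    by (auto intro: finite_subset)
  obtain as d where "\<forall>j. as j \<le> p"
    and S: "S \<in> set_pmf (niche (card (Fs ! i) + p + 1) mu (Fs ! i) as d {..p} Sel)"
  proof -
    from assms(3) show thesis
      unfolding survival_def Let_def Fs_def[symmetric] i_def[symmetric] Sel_def[symmetric]
      by (rule that[rotated]) (intro allI Least_argmin_le)
  qed
  moreover have "card (Fs ! i - Sel) + card {..p} \<le> card (Fs ! i) + p + 1"
    using fin by (simp add: card_mono)
  ultimately have "Sel \<subseteq> S \<and> S \<subseteq> Sel \<union> Fs ! i \<and> (mu \<le> card S \<or> Fs ! i \<subseteq> S)"
    by (intro niche_invariant[OF fin(1,2) finite_atMost _ _ S]) auto
  with L \<open>Sel \<subseteq> {..<length R}\<close> assms(1) show ?thesis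
    by auto
qed

lemma survivors_in_population:
  assumes "1 \<le> mu" "mu \<le> length R" "S \<in> set_pmf (survival mu p nd H R)"
  shows "map ((!) R) (sorted_list_of_set S) \<noteq> [] \<and> set (map ((!) R) (sorted_list_of_set S)) \<subseteq> set R"
proof -
  have "S \<subseteq> {..<length R}" "S \<noteq> {}"
    using survival_subset_nonempty[OF assms] by auto
  moreover have "finite S"
    using calculation(1) finite_subset by blast
  ultimately show ?thesis
    by auto
qed

section \<open>Growth of the number of ones\<close>

definition offspring :: "nat \<Rightarrow> bool list list \<Rightarrow> bool list pmf" where
  "offspring n P = bind_pmf (pmf_of_set {..<length P}) (\<lambda>i. mutate n (P ! i))"

definition ones_bounded_population :: "nat \<Rightarrow> nat \<Rightarrow> bool list list \<Rightarrow> bool" where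
  "ones_bounded_population n A P \<longleftrightarrow> P \<noteq> [] \<and> (\<forall>y\<in>set P. length y = n \<and> ones y \<le> A)"

lemma prob_offspring_exceeds_le:
  assumes "ones_bounded_population n A P"
  shows "measure_pmf.prob (offspring n P) {y. \<not> (length y = n \<and> ones y \<le> A + j)} \<le> 1 / fact (Suc j)"
proof -
  have "measure_pmf.prob (offspring n P) {y. \<not> (length y = n \<and> ones y \<le> A + j)}
      \<le> measure_pmf.prob (pmf_of_set {..<length P}) (- UNIV) + 1 / fact (Suc j)"
    unfolding offspring_def
  proof (rule prob_bind_pmf_le)
    fix i assume "i \<in> set_pmf (pmf_of_set {..<length P})"
    then have "i < length P"
      using assms by (subst (asm) set_pmf_of_set) (auto simp: ones_bounded_population_def)
    then have len: "length (P ! i) = n" and "ones (P ! i) \<le> A"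
      using assms nth_mem by (auto simp: ones_bounded_population_def)
    then have "measure_pmf.prob (mutate n (P ! i)) {y. \<not> (length y = n \<and> ones y \<le> A + j)}
        \<le> measure_pmf.prob (mutate n (P ! i)) {y. ones (P ! i) + Suc j \<le> ones y}"
      by (intro prob_mono_on_set_pmf) (auto dest: length_mutate)
    also have "\<dots> \<le> real (n choose Suc j) * (1 / real n) ^ Suc j"
      using prob_mutate_gain_ge[of n "P ! i" "Suc j"] len by simp
    also have "\<dots> \<le> 1 / fact (Suc j)"
      by (rule binomial_mult_inverse_pow_le)
    finally show "measure_pmf.prob (mutate n (P ! i)) {y. \<not> (length y = n \<and> ones y \<le> A + j)}
        \<le> 1 / fact (Suc j)" .
  qed simp
  then show ?thesis by simp
qed

lemma prob_step_exceeds_le: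
  assumes "ones_bounded_population n A P" "1 \<le> mu"
  shows "measure_pmf.prob (nsga3_step n mu p nadf (P, H))
           {s. \<not> ones_bounded_population n (A + j) (fst s)} \<le> real mu / fact (Suc j)"
proof -
  define Bad where "Bad = {y. \<not> (length y = n \<and> ones y \<le> A + j)}"
  have "measure_pmf.prob (nsga3_step n mu p nadf (P, H)) {s. \<not> ones_bounded_population n (A + j) (fst s)}
     \<le> measure_pmf.prob (iid_list mu (offspring n P)) (- {Q. \<forall>y\<in>set Q. y \<notin> Bad}) + 0"
    unfolding nsga3_step_def case_prod_conv offspring_def[symmetric] Let_def
  proof (rule prob_bind_pmf_le)
    fix Q assume Q: "Q \<in> set_pmf (iid_list mu (offspring n P))" "Q \<in> {Q. \<forall>y\<in>set Q. y \<notin> Bad}"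
    have "ones_bounded_population n (A + j) (map ((!) (P @ Q)) (sorted_list_of_set S))"
      if "S \<in> set_pmf (survival mu p (nadf (H @ [P @ Q])) (H @ [P @ Q]) (P @ Q))" for S
      using survivors_in_population[OF assms(2) _ that] set_pmf_iid_list[OF Q(1)] assms(1) Q(2)
      by (fastforce simp: ones_bounded_population_def Bad_def)
    then show "measure_pmf.prob (map_pmf (\<lambda>S. (map ((!) (P @ Q)) (sorted_list_of_set S), H @ [P @ Q]))
        (survival mu p (nadf (H @ [P @ Q])) (H @ [P @ Q]) (P @ Q)))
        {s. \<not> ones_bounded_population n (A + j) (fst s)} \<le> 0"
      by (auto simp: measure_le_0_iff measure_pmf_zero_iff)
  qed simp
  also have "\<dots> \<le> real mu * measure_pmf.prob (offspring n P) Bad"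
    using prob_iid_list_exists_le[of mu "offspring n P" Bad] by (simp add: Compl_eq set_diff_eq)
  also have "\<dots> \<le> real mu / fact (Suc j)"
    using mult_left_mono[OF prob_offspring_exceeds_le[OF assms(1), of j], of "real mu"]
    by (simp add: Bad_def)
  finally show ?thesis .
qed

lemma prob_run_exceeds_le:
  assumes "1 \<le> mu"
  shows "measure_pmf.prob (nsga3_run n mu p nadf t) {s. \<not> ones_bounded_population n (A + t * j) (fst s)}
    \<le> real mu * ((3 / 2) ^ n / 2 ^ Suc A) + real t * (real mu / fact (Suc j))"
proof (induction t)
  case 0
  let ?U = "pmf_of_set {x :: bool list. length x = n}"
  have "set_pmf ?U = {x. length x = n}"
    using finite_lists_length_eq[of "UNIV :: bool set" n]
    by (intro set_pmf_of_set) (auto intro: exI[of _ "replicate n True"])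
  have "measure_pmf.prob (nsga3_run n mu p nadf 0) {s. \<not> ones_bounded_population n A (fst s)}
      = measure_pmf.prob (iid_list mu ?U) {P. \<not> ones_bounded_population n A P}"
    by (simp add: vimage_def)
  also have "\<dots> \<le> measure_pmf.prob (iid_list mu ?U) {xs. \<exists>x\<in>set xs. x \<in> {y. Suc A \<le> ones y}}"
    using assms \<open>set_pmf ?U = {x. length x = n}\<close>
    by (intro prob_mono_on_set_pmf)
      (fastforce dest!: set_pmf_iid_list simp: ones_bounded_population_def not_le Suc_le_eq)
  also have "\<dots> \<le> real mu * measure_pmf.prob ?U {y. Suc A \<le> ones y}"
    by (rule prob_iid_list_exists_le)
  also have "\<dots> \<le> real mu * ((3 / 2) ^ n / 2 ^ Suc A)"
    by (intro mult_left_mono prob_uniform_ones_ge) auto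
  finally show ?case by simp
next
  case (Suc t)
  have "measure_pmf.prob (nsga3_run n mu p nadf (Suc t))
          {s. \<not> ones_bounded_population n (A + Suc t * j) (fst s)}
      \<le> measure_pmf.prob (nsga3_run n mu p nadf t) (- {s. ones_bounded_population n (A + t * j) (fst s)})
        + real mu / fact (Suc j)"
    unfolding nsga3_run.simps
  proof (rule prob_bind_pmf_le)
    fix s :: "bool list list \<times> bool list list list"
    assume "s \<in> {s. ones_bounded_population n (A + t * j) (fst s)}"
    then have "measure_pmf.prob (nsga3_step n mu p nadf s)
        {s. \<not> ones_bounded_population n (A + t * j + j) (fst s)} \<le> real mu / fact (Suc j)"
      using prob_step_exceeds_le[of n "A + t * j" "fst s" mu p nadf "snd s" j] assms by simp
    moreover have "A + Suc t * j = A + t * j + j"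
      by simp
    ultimately show "measure_pmf.prob (nsga3_step n mu p nadf s)
        {s. \<not> ones_bounded_population n (A + Suc t * j) (fst s)} \<le> real mu / fact (Suc j)"
      by (simp only:)
  qed simp
  also have "\<dots> \<le> real mu * ((3 / 2) ^ n / 2 ^ Suc A) + real t * (real mu / fact (Suc j))
      + real mu / fact (Suc j)"
    using Suc.IH unfolding Compl_eq mem_Collect_eq by (rule add_right_mono)
  finally show ?case
    by (simp add: algebra_simps add_divide_distrib)
qed

definition many_ones_bound :: "real \<Rightarrow> real \<Rightarrow> nat \<Rightarrow> real" where
  "many_ones_bound c M n = M * ((3 / 2) / 2 powr (2 / 3)) ^ n
     + c * M * (real n / ln (real n)) / ((ln (real n) / (13 * c) / exp 1) powr (ln (real n) / (13 * c)))"

lemma prob_run_many_ones_le: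
  fixes c M :: real
  assumes "2 \<le> n" "1 \<le> mu" "real mu \<le> M" "0 < c"
  shows "measure_pmf.prob (nsga3_run n mu p nadf (nat \<lfloor>c * real n / ln (real n)\<rfloor>))
            {s. \<exists>y\<in>set (fst s). real (ones y) \<ge> 3 * real n / 4} \<le> many_ones_bound c M n"
proof -
  define T where "T = nat \<lfloor>c * real n / ln (real n)\<rfloor>"
  define L where "L = ln (real n) / (13 * c)"
  define j where "j = nat \<lfloor>L\<rfloor>"
  define A where "A = 2 * n div 3"
  have "0 < ln (real n)"
    using assms(1) by simp
  then have "0 < L" and T: "real T \<le> c * real n / ln (real n)"
    using assms(4) by (auto simp: L_def T_def)
  then have "real j = of_int \<lfloor>L\<rfloor>"
    by (simp add: j_def)
  then have j: "real j \<le> L" "L \<le> real j + 1"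
    using real_of_int_floor_add_one_ge[of L] by simp_all
  have "real T * real j \<le> c * real n / ln (real n) * L"
    using T j \<open>0 < L\<close> by (intro mult_mono) auto
  also have "\<dots> = real n / 13"
    using assms(4) \<open>0 < ln (real n)\<close> by (simp add: L_def field_simps)
  finally have "real T * real j \<le> real n / 13" .
  moreover have "real (3 * A) \<le> real (2 * n)"
    unfolding A_def of_nat_le_iff by presburger
  ultimately have "real (A + T * j) < 3 * real n / 4"
    using assms(1) by simp
  have "\<not> ones_bounded_population n (A + T * j) P" if "y \<in> set P" "3 * real n / 4 \<le> real (ones y)" for P y
  proof
    assume "ones_bounded_population n (A + T * j) P"
    then have "real (ones y) \<le> real (A + T * j)"
      using that(1) unfolding of_nat_le_iff by (simp add: ones_bounded_population_def)
    with that(2) \<open>real (A + T * j) < 3 * real n / 4\<close> show False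
      by linarith
  qed
  then have "measure_pmf.prob (nsga3_run n mu p nadf T) {s. \<exists>y\<in>set (fst s). real (ones y) \<ge> 3 * real n / 4}
      \<le> measure_pmf.prob (nsga3_run n mu p nadf T) {s. \<not> ones_bounded_population n (A + T * j) (fst s)}"
    by (intro measure_pmf.finite_measure_mono) auto
  also have "\<dots> \<le> real mu * ((3 / 2) ^ n / 2 ^ Suc A) + real T * (real mu / fact (Suc j))"
    by (rule prob_run_exceeds_le[OF assms(2)])
  also have "\<dots> \<le> M * ((3 / 2) / 2 powr (2 / 3)) ^ n + c * M * (real n / ln (real n)) / ((L / exp 1) powr L)"
  proof (rule add_mono)
    show "real mu * ((3 / 2) ^ n / 2 ^ Suc A) \<le> M * ((3 / 2) / 2 powr (2 / 3)) ^ n"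
      using assms(3) three_halves_pow_div_le[of n] by (intro mult_mono) (auto simp: A_def)
    have "(L / exp 1) powr L \<le> fact (Suc j)"
      using \<open>0 < L\<close> j by (intro powr_div_exp_le_fact) auto
    then have "real mu / fact (Suc j) \<le> M / (L / exp 1) powr L"
      using assms(2,3) \<open>0 < L\<close> by (intro frac_le) auto
    with T have "real T * (real mu / fact (Suc j)) \<le> c * real n / ln (real n) * (M / (L / exp 1) powr L)"
      using assms(2,3) by (intro mult_mono) auto
    then show "real T * (real mu / fact (Suc j)) \<le> c * M * (real n / ln (real n)) / ((L / exp 1) powr L)"
      by (simp add: field_simps)
  qed
  finally show ?thesis
    by (simp add: many_ones_bound_def T_def L_def)
qed

lemma tendsto_many_ones_bound:
  assumes "0 < c"
  shows "(\<lambda>n. many_ones_bound c (C * real n ^ K) n) \<longlonglongrightarrow> 0"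
proof -
  define r :: real where "r = (3 / 2) / 2 powr (2 / 3)"
  have "0 < r" "r < 1"
    using three_halves_div_two_powr_less_one by (auto simp: r_def)
  then have "(\<lambda>n. real n ^ K * r ^ n) \<longlonglongrightarrow> 0"
    by real_asymp
  moreover have "(\<lambda>n. real n ^ K * (real n / ln (real n))
      / ((ln (real n) / (13 * c) / exp 1) powr (ln (real n) / (13 * c)))) \<longlonglongrightarrow> 0"
    using assms by real_asymp
  ultimately have "(\<lambda>n. C * (real n ^ K * r ^ n) + c * C * (real n ^ K * (real n / ln (real n))
      / ((ln (real n) / (13 * c) / exp 1) powr (ln (real n) / (13 * c))))) \<longlonglongrightarrow> C * 0 + c * C * 0"
    by (intro tendsto_intros)
  then show ?thesis
    by (simp add: many_ones_bound_def r_def ac_simps)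
qed

theorem lemma5:
  fixes mu p :: "nat \<Rightarrow> nat" and eps :: "nat \<Rightarrow> real"
    and nadf :: "nat \<Rightarrow> bool list list list \<Rightarrow> real \<times> real" and c :: real
  assumes "\<forall>n. mu n \<ge> n + 1"
    and "\<exists>k::nat. (\<lambda>n. real (mu n)) \<in> O(\<lambda>n. real n ^ k)"
    and "\<forall>n. eps n \<ge> real n"
    and "\<forall>n. real (p n) \<ge> 4 * sqrt 2 * real n"
    and "\<forall>n H. eps n \<le> fst (nadf n H) \<and> eps n \<le> snd (nadf n H)"
    and "c > 0"
  shows "(\<lambda>n. measure_pmf.prob (nsga3_run n (mu n) (p n) (nadf n) (nat \<lfloor>c * real n / ln (real n)\<rfloor>))
            {s. \<exists>y\<in>set (fst s). real (ones y) \<ge> 3 * real n / 4}) \<longlonglongrightarrow> 0"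
proof -
  obtain K C where "eventually (\<lambda>n. real (mu n) \<le> C * real n ^ K) at_top"
    using assms(2) by (auto elim!: landau_o.bigE)
  then have "eventually (\<lambda>n. measure_pmf.prob
      (nsga3_run n (mu n) (p n) (nadf n) (nat \<lfloor>c * real n / ln (real n)\<rfloor>))
      {s. \<exists>y\<in>set (fst s). real (ones y) \<ge> 3 * real n / 4} \<le> many_ones_bound c (C * real n ^ K) n) at_top"
    using eventually_ge_at_top[of 2]
  proof eventually_elim
    case (elim n)
    moreover have "1 \<le> mu n"
      using assms(1) by (metis add_leD2)
    ultimately show ?case
      using assms(6) by (intro prob_run_many_ones_le) auto
  qed
  from tendsto_sandwich[OF _ this tendsto_const tendsto_many_ones_bound[OF assms(6)]] show ?thesis
    by simp
qed

end
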